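(* Assume $\det D_{m,0}\neq 0$ and $\det Z_1\neq 0$. Then, as $\epsilon\to 0$, \begin{align*} \det\beta_{m+2}=&\epsilon^{-r}\begin{vmatrix} -mS_D(\beta_m)_1^{-1}& mS_D(\beta_m)^{-1}_1B_{m,1}D_{m,0}^{-1}+B_{m-1,0} \\ mD_{m,0}^{-1}C_{m,0}S_D(\beta_m)_1^{-1}&(m+1)Z_{1}^{-1}-mD_{m,0}^{-1} -mD_{m,0}^{-1}C_{m,0}S_{D}(\beta_m)_{1}^{-1}B_{m,1}D_{m,0}^{-1} +D_{m-1,0} \end{vmatrix}+O(\epsilon^{-r+1}). \end{align*}
   Context: Consider the matrix discrete Painlev\'e I equation $\beta_{n+1}=n\beta_{n}^{-1}-\beta_{n-1}-\beta_{n}-\alpha$, $n=1,2,\ldots$, with $\beta_n,\alpha\in\mathbb{C}^{N\times N}$. Fix $r\in\{1,\dots,N-1\}$ and $m\geq 2$, and write every $N\times N$ matrix in blocks $\begin{pmatrix} A & B\\ C & D\end{pmatrix}$ with $A\in\mathbb{C}^{r\times r}$, $B\in\mathbb{C}^{r\times(N-r)}$, $C\in\mathbb{C}^{(N-r)\times r}$, $D\in\mathbb{C}^{(N-r)\times(N-r)}$. The initial data depend on a small parameter $\epsilon\to0$ as $\beta_{m-1}=\sum_{i\geq 0}\begin{pmatrix}A_{m-1,i}&B_{m-1,i}\\C_{m-1,i}&D_{m-1,i}\end{pmatrix}\epsilon^{i}$, $\beta_{m}=\begin{pmatrix}0&0\\C_{m,0}&D_{m,0}\end{pmatrix}+\sum_{i\geq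 1}\begin{pmatrix}A_{m,i}&B_{m,i}\\C_{m,i}&D_{m,i}\end{pmatrix}\epsilon^{i}$, with $\det\beta_m$ of exact order $\epsilon^{r}$, i.e. $\det\begin{pmatrix}A_{m,1}&B_{m,1}\\C_{m,0}&D_{m,0}\end{pmatrix}\neq 0$, and $\alpha=\begin{pmatrix}\alpha_{11}&\alpha_{12}\\\alpha_{21}&\alpha_{22}\end{pmatrix}$ independent of $\epsilon$. When $\det D_{m,0}\neq0$ set $S_D(\beta_m)_1:=A_{m,1}-B_{m,1}D_{m,0}^{-1}C_{m,0}\in\mathbb{C}^{r\times r}$ (which is then invertible) and $Z_1:=mD_{m,0}^{-1}-D_{m-1,0}-D_{m,0}-\alpha_{22}-D_{m,0}^{-1}C_{m,0}(B_{m-1,0}+\alpha_{12})$. The matrices $\beta_{m+1},\beta_{m+2}$ are obtained from $\beta_{m-1},\beta_m$ by iterating the equation. *)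

theory Defs
  imports "HOL-Analysis.Analysis" "HOL-Library.Landau_Symbols"
begin

text \<open>N x N matrices are indexed by the sum type 'r + 's, with CARD('r) = r and
  CARD('s) = N - r; the left summand indexes the first r rows/columns.\<close>

definition blkA :: "complex ^ ('r::finite + 's::finite) ^ ('r + 's) \<Rightarrow> complex ^ 'r ^ 'r"
  where "blkA M = (\<chi> i j. M $ Inl i $ Inl j)"
definition blkB :: "complex ^ ('r::finite + 's::finite) ^ ('r + 's) \<Rightarrow> complex ^ 's ^ 'r"
  where "blkB M = (\<chi> i j. M $ Inl i $ Inr j)"
definition blkC :: "complex ^ ('r::finite + 's::finite) ^ ('r + 's) \<Rightarrow> complex ^ 'r ^ 's"
  where "blkC M = (\<chi> i j. M $ Inr i $ Inl j)"
definition blkD :: "complex ^ ('r::finite + 's::finite) ^ ('r + 's) \<Rightarrow> complex ^ 's ^ 's"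
  where "blkD M = (\<chi> i j. M $ Inr i $ Inr j)"

definition block :: "complex ^ 'r::finite ^ 'r \<Rightarrow> complex ^ 's::finite ^ 'r \<Rightarrow> complex ^ 'r ^ 's
    \<Rightarrow> complex ^ 's ^ 's \<Rightarrow> complex ^ ('r + 's) ^ ('r + 's)"
  where "block A B C D = (\<chi> i j. case i of
      Inl a \<Rightarrow> (case j of Inl b \<Rightarrow> A $ a $ b | Inr b \<Rightarrow> B $ a $ b)
    | Inr a \<Rightarrow> (case j of Inl b \<Rightarrow> C $ a $ b | Inr b \<Rightarrow> D $ a $ b))"

definition mser :: "(nat \<Rightarrow> complex ^ 'n::finite ^ 'm::finite) \<Rightarrow> complex \<Rightarrow> complex ^ 'n ^ 'm"
  where "mser P \<epsilon> = (\<chi> i j. \<Sum>k. P k $ i $ j * \<epsilon> ^ k)"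

definition dPI_step :: "nat \<Rightarrow> complex ^ 'n::finite ^ 'n \<Rightarrow> complex ^ 'n ^ 'n \<Rightarrow> complex ^ 'n ^ 'n
    \<Rightarrow> complex ^ 'n ^ 'n"
  where "dPI_step n bprev bcur \<alpha> = real n *\<^sub>R matrix_inv bcur - bprev - bcur - \<alpha>"

end

theory Submission
  imports Defs
begin

text \<open>Since the top block row of \<open>\<beta>\<^sub>m\<close> vanishes at \<open>\<epsilon> = 0\<close>, we can write
  \<open>\<beta>\<^sub>m = E(\<epsilon>) M(\<epsilon>)\<close> with \<open>E(\<epsilon>) = diag(\<epsilon> I\<^sub>r, I\<^sub>N\<^sub>-\<^sub>r)\<close> and \<open>M\<close> analytic,
  \<open>M(0) = [A\<^sub>m\<^sub>,\<^sub>1, B\<^sub>m\<^sub>,\<^sub>1; C\<^sub>m\<^sub>,\<^sub>0, D\<^sub>m\<^sub>,\<^sub>0]\<close> invertible. Then \<open>\<beta>\<^sub>m\<^sub>+\<^sub>1 = X(\<epsilon>) E(\<epsilon>)\<^sup>-\<^sup>1\<close> and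
  \<open>\<beta>\<^sub>m\<^sub>+\<^sub>2 = Y(\<epsilon>) E(\<epsilon>)\<^sup>-\<^sup>1\<close>, where \<open>X\<close> and \<open>Y\<close> are built from \<open>M\<close>, \<open>\<beta>\<^sub>m\<^sub>-\<^sub>1\<close>,
  \<open>\<alpha>\<close> and \<open>E\<close> by products and inverses only, hence are analytic at \<open>0\<close> as long as
  \<open>M(0)\<close> and \<open>X(0)\<close> are invertible. Therefore
  \<open>det \<beta>\<^sub>m\<^sub>+\<^sub>2 = \<epsilon>\<^sup>-\<^sup>r det Y(\<epsilon>) = \<epsilon>\<^sup>-\<^sup>r det Y(0) + O(\<epsilon>\<^sup>1\<^sup>-\<^sup>r)\<close>. The value \<open>Y(0)\<close> is
  block algebra: \<open>M(0)\<^sup>-\<^sup>1\<close> is expressed through the Schur complement \<open>S\<^sub>D(\<beta>\<^sub>m)\<^sub>1\<close> of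
  \<open>D\<^sub>m\<^sub>,\<^sub>0\<close>, and \<open>X(0)\<^sup>-\<^sup>1\<close> through the Schur complement \<open>Z\<^sub>1\<close> of its upper left block.\<close>

lemma matrix_inv_inverse:
  fixes A :: "'a::field^'n^'n"
  assumes "det A \<noteq> 0"
  shows "A ** matrix_inv A = mat 1" and "matrix_inv A ** A = mat 1"
proof -
  have "\<exists>A'. A ** A' = mat 1 \<and> A' ** A = mat 1"
    using assms invertible_det_nz unfolding invertible_def by blast
  then have "A ** matrix_inv A = mat 1 \<and> matrix_inv A ** A = mat 1"
    unfolding matrix_inv_def by (rule someI_ex)
  then show "A ** matrix_inv A = mat 1" and "matrix_inv A ** A = mat 1" by auto
qed

lemma det_nonzero_if_right_inverse:
  fixes A :: "'a::field^'n^'n"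
  assumes "A ** B = mat 1"
  shows "det A \<noteq> 0"
  using det_mul[of A B] assms by auto

lemma matrix_inv_eqI:
  fixes A :: "'a::field^'n^'n"
  assumes "A ** B = mat 1"
  shows "matrix_inv A = B"
proof -
  have "matrix_inv A = matrix_inv A ** (A ** B)" using assms by simp
  also have "\<dots> = B"
    using matrix_inv_inverse(2)[OF det_nonzero_if_right_inverse[OF assms]]
    by (simp add: matrix_mul_assoc)
  finally show ?thesis .
qed

lemma matrix_mul_cancel_right:
  fixes A :: "'a::semiring_1^'n^'n"
  assumes "A ** B = mat 1"
  shows "X ** A ** B = X"
  by (metis assms matrix_mul_assoc matrix_mul_rid)

lemma matrix_add_rdistrib: "((A::'a::semiring_1^'n^'m) + B) ** C = A ** C + B ** C"
  by (vector matrix_matrix_mult_def sum.distrib[symmetric] field_simps)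

lemma matrix_diff_ldistrib: "(A::'a::ring_1^'n^'m) ** (B - C) = A ** B - A ** C"
  by (vector matrix_matrix_mult_def sum_subtractf[symmetric] field_simps)

lemma matrix_diff_rdistrib: "((A::'a::ring_1^'n^'m) - B) ** C = A ** C - B ** C"
  by (vector matrix_matrix_mult_def sum_subtractf[symmetric] field_simps)

lemma matrix_neg_mul: "(- (A::'a::ring_1^'n^'m)) ** C = - (A ** C)"
  by (vector matrix_matrix_mult_def sum_negf[symmetric])

lemma matrix_mul_neg: "(A::'a::ring_1^'n^'m) ** (- C) = - (A ** C)"
  by (vector matrix_matrix_mult_def sum_negf[symmetric])

lemma matrix_mul_scaleR: "(A::'a::real_algebra_1^'n^'m) ** (c *\<^sub>R C) = c *\<^sub>R (A ** C)"
  by (simp add: matrix_matrix_mult_def sum_distrib_left mult_ac vec_eq_iff scaleR_sum_right)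

lemmas matrix_mul_normalize = matrix_add_ldistrib matrix_add_rdistrib matrix_diff_ldistrib
  matrix_diff_rdistrib matrix_neg_mul matrix_mul_neg scalar_matrix_assoc[symmetric]
  matrix_mul_scaleR matrix_mul_assoc

lemma blk_block [simp]:
  "blkA (block A B C D) = A" "blkB (block A B C D) = B"
  "blkC (block A B C D) = C" "blkD (block A B C D) = D"
  by (simp_all add: blkA_def blkB_def blkC_def blkD_def block_def vec_eq_iff)

lemma block_blk: "block (blkA M) (blkB M) (blkC M) (blkD M) = M"
  by (auto simp: blkA_def blkB_def blkC_def blkD_def block_def vec_eq_iff split: sum.splits)

lemma block_eq_iff:
  "block A B C D = block A' B' C' D' \<longleftrightarrow> A = A' \<and> B = B' \<and> C = C' \<and> D = D'"
  by (metis blk_block)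

lemma block_add [simp]:
  "block A B C D + block A' B' C' D' = block (A + A') (B + B') (C + C') (D + D')"
  by (auto simp: block_def vec_eq_iff split: sum.splits)

lemma block_scaleR [simp]: "c *\<^sub>R block A B C D = block (c *\<^sub>R A) (c *\<^sub>R B) (c *\<^sub>R C) (c *\<^sub>R D)"
  by (auto simp: block_def vec_eq_iff split: sum.splits)

lemma block_mult [simp]:
  "block A B C D ** block A' B' C' D' =
     block (A ** A' + B ** C') (A ** B' + B ** D') (C ** A' + D ** C') (C ** B' + D ** D')"
  by (auto simp: block_def vec_eq_iff matrix_matrix_mult_def sum.Plus[of UNIV UNIV, simplified]
      split: sum.splits)

lemma block_mat_1: "mat 1 = block (mat 1) 0 0 (mat 1)"
  by (auto simp: block_def vec_eq_iff mat_def split: sum.splits)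

lemma block_inverse_via_schur_A:
  assumes "A ** A' = mat 1" and "S ** S' = mat 1" and "S = D - C ** A' ** B"
  shows "block A B C D **
      block (A' + A' ** B ** S' ** C ** A') (- (A' ** B ** S')) (- (S' ** C ** A')) S' = mat 1"
  using assms
  by (simp add: block_mat_1 block_eq_iff matrix_mul_normalize matrix_mul_cancel_right algebra_simps)

lemma block_inverse_via_schur_D:
  assumes "D ** D' = mat 1" and "S ** S' = mat 1" and "S = A - B ** D' ** C"
  shows "block A B C D **
      block S' (- (S' ** B ** D')) (- (D' ** C ** S')) (D' + D' ** C ** S' ** B ** D') = mat 1"
  using assms
  by (simp add: block_mat_1 block_eq_iff matrix_mul_normalize matrix_mul_cancel_right algebra_simps)

lemma schur_complement_D_invertible:
  assumes "det (block A B C D) \<noteq> 0" and "D' ** D = mat 1"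
  shows "det (A - B ** D' ** C) \<noteq> 0"
proof -
  define W where "W = matrix_inv (block A B C D)"
  have "block A B C D ** block (blkA W) (blkB W) (blkC W) (blkD W) = mat 1"
    unfolding block_blk W_def using matrix_inv_inverse(1)[OF assms(1)] .
  then have top: "A ** blkA W + B ** blkC W = mat 1" and bottom: "C ** blkA W + D ** blkC W = 0"
    by (simp_all add: block_mat_1 block_eq_iff)
  have "blkC W = - (D' ** C ** blkA W)"
    using arg_cong[OF bottom, of "(**) D'"] assms(2)
    by (simp add: matrix_mul_normalize eq_neg_iff_add_eq_0 add.commute)
  then have "(A - B ** D' ** C) ** blkA W = mat 1"
    using top by (simp add: matrix_mul_normalize)
  then show ?thesis by (rule det_nonzero_if_right_inverse)
qed

definition matrix_differentiable_at :: "(complex \<Rightarrow> complex^'n::finite^'m::finite) \<Rightarrow> complex \<Rightarrow> bool"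
  where "matrix_differentiable_at F a \<longleftrightarrow> (\<forall>i j. (\<lambda>z. F z $ i $ j) field_differentiable (at a))"

lemma matrix_differentiable_at_const [simp]: "matrix_differentiable_at (\<lambda>z. C) a"
  by (simp add: matrix_differentiable_at_def)

lemma matrix_differentiable_at_add:
  "matrix_differentiable_at F a \<Longrightarrow> matrix_differentiable_at G a \<Longrightarrow>
    matrix_differentiable_at (\<lambda>z. F z + G z) a"
  by (simp add: matrix_differentiable_at_def field_differentiable_add)

lemma matrix_differentiable_at_diff:
  "matrix_differentiable_at F a \<Longrightarrow> matrix_differentiable_at G a \<Longrightarrow>
    matrix_differentiable_at (\<lambda>z. F z - G z) a"
  by (simp add: matrix_differentiable_at_def field_differentiable_diff)

lemma matrix_differentiable_at_scaleR:
  "matrix_differentiable_at F a \<Longrightarrow> matrix_differentiable_at (\<lambda>z. c *\<^sub>R F z) a"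
  by (auto simp: matrix_differentiable_at_def scaleR_conv_of_real intro!: field_differentiable_mult)

lemma matrix_differentiable_at_mult:
  "matrix_differentiable_at F a \<Longrightarrow> matrix_differentiable_at G a \<Longrightarrow>
    matrix_differentiable_at (\<lambda>z. F z ** G z) a"
  unfolding matrix_differentiable_at_def matrix_matrix_mult_def
  by (auto intro!: field_differentiable_sum field_differentiable_mult)

lemma field_differentiable_prod:
  "(\<And>i. i \<in> S \<Longrightarrow> f i field_differentiable (at a)) \<Longrightarrow>
    (\<lambda>z. \<Prod>i\<in>S. f i z) field_differentiable (at (a::complex))"
  by (induct S rule: infinite_finite_induct) (auto intro!: field_differentiable_mult)

lemma field_differentiable_det:
  "matrix_differentiable_at F a \<Longrightarrow> (\<lambda>z. det (F z)) field_differentiable (at a)"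
  unfolding matrix_differentiable_at_def det_def
  by (auto intro!: field_differentiable_sum field_differentiable_mult field_differentiable_prod)

lemma det_eventually_nonzero:
  assumes "matrix_differentiable_at F a" and "det (F a) \<noteq> 0"
  shows "\<forall>\<^sub>F z in at a. det (F z) \<noteq> 0"
proof -
  have "isCont (\<lambda>z. det (F z)) a"
    using field_differentiable_det[OF assms(1)] field_differentiable_imp_continuous_at by blast
  then show ?thesis
    using assms(2) tendsto_imp_eventually_ne unfolding isCont_def by blast
qed

lemma matrix_inv_cramer:
  fixes A :: "'a::field^'n^'n"
  assumes "det A \<noteq> 0"
  shows "matrix_inv A $ i $ k = det (\<chi> r c. if c = i then of_bool (r = k) else A $ r $ c) / det A"
proof -
  have "A *v (\<chi> j. matrix_inv A $ j $ k) = (\<chi> r. of_bool (r = k))"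
    using matrix_inv_inverse(1)[OF assms]
    by (simp add: vec_eq_iff matrix_vector_mult_def matrix_matrix_mult_def mat_def)
  then have "(\<chi> j. matrix_inv A $ j $ k) $ i =
      (\<chi> l. det (\<chi> r c. if c = l then (\<chi> r. of_bool (r = k)) $ r else A $ r $ c) / det A) $ i"
    by (simp only: cramer[OF assms])
  then show ?thesis by (simp cong: if_cong)
qed

lemma matrix_differentiable_at_inv:
  assumes F: "matrix_differentiable_at F a" and "det (F a) \<noteq> 0"
  shows "matrix_differentiable_at (\<lambda>z. matrix_inv (F z)) a"
  unfolding matrix_differentiable_at_def
proof (intro allI)
  fix i k
  let ?cramer = "\<lambda>z. det (\<chi> r c. if c = i then of_bool (r = k) else F z $ r $ c) / det (F z)"
  have "matrix_differentiable_at (\<lambda>z. \<chi> r c. if c = i then of_bool (r = k) else F z $ r $ c) a"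
    unfolding matrix_differentiable_at_def
  proof (intro allI)
    fix r c
    show "(\<lambda>z. (\<chi> r c. if c = i then of_bool (r = k) else F z $ r $ c) $ r $ c)
        field_differentiable (at a)"
      using F by (cases "c = i") (auto simp: matrix_differentiable_at_def)
  qed
  then have diff: "?cramer field_differentiable (at a)"
    using field_differentiable_det F assms(2) by (intro field_differentiable_divide) auto
  have ev: "\<forall>\<^sub>F z in nhds a. ?cramer z = matrix_inv (F z) $ i $ k"
  proof -
    have "\<forall>\<^sub>F z in at a. ?cramer z = matrix_inv (F z) $ i $ k"
      using det_eventually_nonzero[OF assms] by eventually_elim (simp add: matrix_inv_cramer)
    then have "\<forall>\<^sub>F z in nhds a. z \<noteq> a \<longrightarrow> ?cramer z = matrix_inv (F z) $ i $ k"
      by (simp add: eventually_at_filter)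
    then show ?thesis
      by eventually_elim (use matrix_inv_cramer[OF assms(2)] in auto)
  qed
  show "(\<lambda>z. matrix_inv (F z) $ i $ k) field_differentiable (at a)"
    using diff DERIV_cong_ev[OF refl ev refl] unfolding field_differentiable_def by blast
qed

lemma field_differentiable_imp_bigo:
  assumes "f field_differentiable (at a)"
  shows "(\<lambda>z. f z - f a) \<in> O[at a](\<lambda>z. z - a)"
proof -
  obtain D where "(f has_field_derivative D) (at a)"
    using assms field_differentiable_def by blast
  then have "((\<lambda>z. (f z - f a) / (z - a)) \<longlongrightarrow> D) (at a)"
    unfolding has_field_derivative_iff by simp
  then show ?thesis
    by (rule bigoI_tendsto) (simp add: eventually_at_filter)
qed

lemma bigo_laurent_leading_term:
  fixes f g :: "complex \<Rightarrow> complex"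
  assumes "\<forall>\<^sub>F z in at 0. f z = z powi (- n) * g z" and "g field_differentiable (at 0)"
  shows "(\<lambda>z. f z - z powi (- n) * g 0) \<in> O[at 0](\<lambda>z. z powi (1 - n))"
proof -
  have "\<forall>\<^sub>F z in at (0::complex). z powi (- n) * z = z powi (1 - n)"
    unfolding eventually_at_filter
    by (rule always_eventually)
      (simp add: power_int_diff power_int_minus divide_inverse mult.commute)
  then have powi: "O[at 0](\<lambda>z. z powi (- n) * z) = O[at 0](\<lambda>z::complex. z powi (1 - n))"
    by (rule landau_o.big.cong)
  have "\<forall>\<^sub>F z in at 0. z powi (- n) * (g z - g 0) = f z - z powi (- n) * g 0"
    using assms(1) by eventually_elim (simp add: right_diff_distrib)
  moreover have "(\<lambda>z. z powi (- n) * (g z - g 0)) \<in> O[at 0](\<lambda>z. z powi (- n) * z)"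
    using field_differentiable_imp_bigo[OF assms(2)] by simp
  ultimately show ?thesis
    unfolding powi by (simp only: landau_o.big.in_cong)
qed

lemma powser_field_differentiable:
  fixes c :: "nat \<Rightarrow> complex"
  assumes "\<And>z. norm z < R \<Longrightarrow> summable (\<lambda>n. c n * z ^ n)" and "norm w < R"
  shows "(\<lambda>z. \<Sum>n. c n * z ^ n) field_differentiable (at w)"
  using termdiffs_strong'[OF assms] field_differentiable_def by blast

lemma matrix_differentiable_at_mser:
  assumes "\<And>z i j. norm z < R \<Longrightarrow> summable (\<lambda>k. P k $ i $ j * z ^ k)" and "norm w < R"
  shows "matrix_differentiable_at (mser P) w"
  using powser_field_differentiable[OF assms]
  by (simp add: matrix_differentiable_at_def mser_def)

definition top_scaling :: "'a::comm_ring_1 \<Rightarrow> 'a^('r::finite + 's::finite)^('r + 's)"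
  where "top_scaling e = (\<chi> i j. if i = j then case_sum (\<lambda>_. e) (\<lambda>_. 1) i else 0)"

lemma top_scaling_mult_left:
  "top_scaling e ** M = (\<chi> i j. case_sum (\<lambda>_. e) (\<lambda>_. 1) i * M $ i $ j)"
  by (simp add: top_scaling_def matrix_matrix_mult_def vec_eq_iff if_distrib if_distribR sum.delta
      cong: if_cong)

lemma top_scaling_mult: "top_scaling e ** top_scaling e' = top_scaling (e * e')"
  unfolding top_scaling_mult_left by (auto simp: top_scaling_def vec_eq_iff split: sum.splits)

lemma det_top_scaling:
  "det (top_scaling e :: 'a::comm_ring_1^('r::finite + 's::finite)^('r + 's)) = e ^ CARD('r)"
  by (subst det_diagonal)
    (simp_all add: top_scaling_def prod.Plus[of UNIV UNIV, simplified] comp_def)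

lemma top_scaling_1: "top_scaling 1 = mat 1"
  by (auto simp: top_scaling_def mat_def vec_eq_iff split: sum.splits)

lemma top_scaling_0: "top_scaling 0 = block 0 0 0 (mat 1)"
  by (auto simp: top_scaling_def block_def mat_def vec_eq_iff split: sum.splits)

lemma matrix_differentiable_at_top_scaling: "matrix_differentiable_at top_scaling a"
  unfolding matrix_differentiable_at_def
proof (intro allI)
  fix i j :: "'r::finite + 's::finite"
  show "(\<lambda>e. top_scaling e $ i $ j) field_differentiable (at a)"
    by (cases j; cases "i = j") (simp_all add: top_scaling_def)
qed

definition shift_top_rows :: "(nat \<Rightarrow> 'a^'c^('r::finite + 's::finite)) \<Rightarrow> nat \<Rightarrow> 'a^'c^('r + 's)"
  where "shift_top_rows Q k = (\<chi> i. case i of Inl _ \<Rightarrow> Q (Suc k) $ i | Inr _ \<Rightarrow> Q k $ i)"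

lemma shift_top_rows_0:
  "shift_top_rows Q 0 = block (blkA (Q 1)) (blkB (Q 1)) (blkC (Q 0)) (blkD (Q 0))"
  by (auto simp: shift_top_rows_def block_def blkA_def blkB_def blkC_def blkD_def vec_eq_iff
      split: sum.splits)

lemma summable_shift_top_rows:
  fixes Q :: "nat \<Rightarrow> 'a::real_normed_div_algebra^'c^('r::finite + 's::finite)"
  assumes "summable (\<lambda>k. Q k $ i $ j * z ^ k)"
  shows "summable (\<lambda>k. shift_top_rows Q k $ i $ j * z ^ k)"
  using assms summable_powser_split_head[of "\<lambda>k. Q k $ i $ j"]
  by (cases i) (simp_all add: shift_top_rows_def)

lemma mser_eq_top_scaling_mult:
  assumes "\<And>i j. summable (\<lambda>k. Q k $ i $ j * z ^ k)" and "blkA (Q 0) = 0" and "blkB (Q 0) = 0"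
  shows "mser Q z = top_scaling z ** mser (shift_top_rows Q) z"
  unfolding top_scaling_mult_left
proof (clarsimp simp: vec_eq_iff)
  fix i j
  have "Q 0 $ Inl r = 0" for r
    using assms(2,3) unfolding vec_eq_iff by (simp add: blkA_def blkB_def) (metis sum.exhaust)
  then show "mser Q z $ i $ j = case_sum (\<lambda>_. z) (\<lambda>_. 1) i * mser (shift_top_rows Q) z $ i $ j"
    using powser_split_head(1)[OF assms(1)[of i j]]
    by (cases i) (simp_all add: mser_def shift_top_rows_def mult.commute)
qed

lemma mser_0: "mser P 0 = P 0"
  by (simp add: mser_def vec_eq_iff)

text \<open>For \<open>\<beta>\<^sub>m = E M\<close> these are \<open>\<beta>\<^sub>m\<^sub>+\<^sub>1 E\<close> and \<open>\<beta>\<^sub>m\<^sub>+\<^sub>2 E\<close>, written without \<open>E\<^sup>-\<^sup>1\<close>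
  so that they make sense at \<open>\<epsilon> = 0\<close>.\<close>

definition dPI_X :: "nat \<Rightarrow> complex^'n::finite^'n \<Rightarrow> complex^'n^'n \<Rightarrow> complex^'n^'n
    \<Rightarrow> complex^'n^'n \<Rightarrow> complex^'n^'n"
  where "dPI_X m E M \<beta> \<alpha> = real m *\<^sub>R matrix_inv M - (\<beta> + E ** M + \<alpha>) ** E"

definition dPI_Y :: "nat \<Rightarrow> complex^'n::finite^'n \<Rightarrow> complex^'n^'n \<Rightarrow> complex^'n^'n
    \<Rightarrow> complex^'n^'n \<Rightarrow> complex^'n^'n"
  where "dPI_Y m E M \<beta> \<alpha> = real (m + 1) *\<^sub>R (E ** matrix_inv (dPI_X m E M \<beta> \<alpha>) ** E)
      - E ** M ** E - dPI_X m E M \<beta> \<alpha> - \<alpha> ** E"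

lemma dPI_step_twice_factor:
  assumes E: "E ** E' = mat 1" "E' ** E = mat 1"
    and M: "det M \<noteq> 0" and X: "det (dPI_X m E M \<beta> \<alpha>) \<noteq> 0"
  shows "dPI_step (m + 1) (E ** M) (dPI_step m \<beta> (E ** M) \<alpha>) \<alpha> = dPI_Y m E M \<beta> \<alpha> ** E'"
proof -
  have "matrix_inv (E ** M) = matrix_inv M ** E'"
    by (rule matrix_inv_eqI)
      (simp add: matrix_mul_normalize matrix_mul_cancel_right matrix_inv_inverse(1)[OF M] E)
  then have next_step: "dPI_step m \<beta> (E ** M) \<alpha> = dPI_X m E M \<beta> \<alpha> ** E'"
    by (simp add: dPI_step_def dPI_X_def matrix_mul_normalize matrix_mul_cancel_right E
        algebra_simps)
  have "matrix_inv (dPI_X m E M \<beta> \<alpha> ** E') = E ** matrix_inv (dPI_X m E M \<beta> \<alpha>)"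
    by (rule matrix_inv_eqI)
      (simp add: matrix_mul_normalize matrix_mul_cancel_right matrix_inv_inverse(1)[OF X] E)
  then show ?thesis
    unfolding next_step
    by (simp add: dPI_step_def dPI_Y_def matrix_mul_normalize matrix_mul_cancel_right E
        algebra_simps)
qed

lemma det_dPI_step_twice_top_scaling:
  fixes M :: "complex^('r::finite + 's::finite)^('r + 's)"
  assumes "e \<noteq> 0" and "det M \<noteq> 0" and "det (dPI_X m (top_scaling e) M \<beta> \<alpha>) \<noteq> 0"
  shows "det (dPI_step (m + 1) (top_scaling e ** M) (dPI_step m \<beta> (top_scaling e ** M) \<alpha>) \<alpha>) =
    e powi (- int CARD('r)) * det (dPI_Y m (top_scaling e) M \<beta> \<alpha>)"
proof -
  have "top_scaling e ** top_scaling (inverse e) = mat 1"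
    and "top_scaling (inverse e) ** top_scaling e = mat 1"
    using assms(1) by (simp_all add: top_scaling_mult flip: top_scaling_1)
  then have "dPI_step (m + 1) (top_scaling e ** M) (dPI_step m \<beta> (top_scaling e ** M) \<alpha>) \<alpha> =
      dPI_Y m (top_scaling e) M \<beta> \<alpha> ** top_scaling (inverse e)"
    using assms(2,3) by (rule dPI_step_twice_factor)
  then show ?thesis
    by (simp add: det_mul det_top_scaling power_int_minus power_inverse mult.commute)
qed

lemma matrix_differentiable_at_dPI_X:
  assumes "matrix_differentiable_at E a" and "matrix_differentiable_at M a"
    and "matrix_differentiable_at \<beta> a" and "det (M a) \<noteq> 0"
  shows "matrix_differentiable_at (\<lambda>z. dPI_X m (E z) (M z) (\<beta> z) \<alpha>) a"
  unfolding dPI_X_def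
  by (intro matrix_differentiable_at_diff matrix_differentiable_at_scaleR
      matrix_differentiable_at_inv matrix_differentiable_at_mult matrix_differentiable_at_add
      matrix_differentiable_at_const assms)

lemma matrix_differentiable_at_dPI_Y:
  assumes "matrix_differentiable_at E a" and "matrix_differentiable_at M a"
    and "matrix_differentiable_at \<beta> a" and "det (M a) \<noteq> 0"
    and "det (dPI_X m (E a) (M a) (\<beta> a) \<alpha>) \<noteq> 0"
  shows "matrix_differentiable_at (\<lambda>z. dPI_Y m (E z) (M z) (\<beta> z) \<alpha>) a"
  unfolding dPI_Y_def
  by (intro matrix_differentiable_at_diff matrix_differentiable_at_scaleR
      matrix_differentiable_at_inv matrix_differentiable_at_mult matrix_differentiable_at_dPI_X
      matrix_differentiable_at_const assms)

lemma dPI_X_degenerate: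
  assumes D: "D ** D' = mat 1" and S: "S ** S' = mat 1" "S = A - B ** D' ** C"
  shows "dPI_X m (block 0 0 0 (mat 1)) (block A B C D) (block Ap Bp Cp Dp) (block a11 a12 a21 a22) =
    block (real m *\<^sub>R S') (- (real m *\<^sub>R (S' ** B ** D')) - (Bp + a12))
      (- (real m *\<^sub>R (D' ** C ** S'))) (real m *\<^sub>R (D' + D' ** C ** S' ** B ** D') - (Dp + D + a22))"
proof -
  have "matrix_inv (block A B C D) =
      block S' (- (S' ** B ** D')) (- (D' ** C ** S')) (D' + D' ** C ** S' ** B ** D')"
    by (rule matrix_inv_eqI) (rule block_inverse_via_schur_D[OF D S])
  then show ?thesis
    by (simp add: dPI_X_def algebra_simps)
qed

lemma dPI_Y_degenerate:
  fixes Ap Cp a11 a21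
  assumes D: "D ** D' = mat 1" and S: "S ** S' = mat 1" "S = A - B ** D' ** C"
    and Z: "Z ** Z' = mat 1" "Z = real m *\<^sub>R D' - Dp - D - a22 - D' ** C ** (Bp + a12)"
    and m: "m \<noteq> 0"
  defines "E\<^sub>0 \<equiv> block 0 0 0 (mat 1)" and "M\<^sub>0 \<equiv> block A B C D"
    and "P\<^sub>0 \<equiv> block Ap Bp Cp Dp" and "\<alpha> \<equiv> block a11 a12 a21 a22"
  shows "det (dPI_X m E\<^sub>0 M\<^sub>0 P\<^sub>0 \<alpha>) \<noteq> 0"
    and "dPI_Y m E\<^sub>0 M\<^sub>0 P\<^sub>0 \<alpha> = block (- (real m *\<^sub>R S')) (real m *\<^sub>R (S' ** B ** D') + Bp)
      (real m *\<^sub>R (D' ** C ** S'))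
      (real (m + 1) *\<^sub>R Z' - real m *\<^sub>R D' - real m *\<^sub>R (D' ** C ** S' ** B ** D') + Dp)"
proof -
  define X\<^sub>B where "X\<^sub>B = - (real m *\<^sub>R (S' ** B ** D')) - (Bp + a12)"
  define X\<^sub>C where "X\<^sub>C = - (real m *\<^sub>R (D' ** C ** S'))"
  define X\<^sub>D where "X\<^sub>D = real m *\<^sub>R (D' + D' ** C ** S' ** B ** D') - (Dp + D + a22)"
  define S\<^sub>m where "S\<^sub>m = (1 / real m) *\<^sub>R S"
  have X0: "dPI_X m E\<^sub>0 M\<^sub>0 P\<^sub>0 \<alpha> = block (real m *\<^sub>R S') X\<^sub>B X\<^sub>C X\<^sub>D"
    unfolding X\<^sub>B_def X\<^sub>C_def X\<^sub>D_def E\<^sub>0_def M\<^sub>0_def P\<^sub>0_def \<alpha>_def by (rule dPI_X_degenerate[OF D S])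
  \<comment> \<open>\<open>Z\<close> is the Schur complement of the upper left block \<open>m S'\<close> of \<open>X(0)\<close>.\<close>
  have "real m *\<^sub>R S' ** S\<^sub>m = mat 1"
    using S(1) m matrix_left_right_inverse[of S S'] by (simp add: S\<^sub>m_def matrix_mul_normalize)
  moreover have "Z = X\<^sub>D - X\<^sub>C ** S\<^sub>m ** X\<^sub>B"
    using S(1) m matrix_left_right_inverse[of S S']
    by (simp add: Z(2) X\<^sub>B_def X\<^sub>C_def X\<^sub>D_def S\<^sub>m_def matrix_mul_normalize matrix_mul_cancel_right
        algebra_simps)
  ultimately have inv: "dPI_X m E\<^sub>0 M\<^sub>0 P\<^sub>0 \<alpha> ** block (S\<^sub>m + S\<^sub>m ** X\<^sub>B ** Z' ** X\<^sub>C ** S\<^sub>m)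
      (- (S\<^sub>m ** X\<^sub>B ** Z')) (- (Z' ** X\<^sub>C ** S\<^sub>m)) Z' = mat 1"
    unfolding X0 by (rule block_inverse_via_schur_A[OF _ Z(1)])
  then show "det (dPI_X m E\<^sub>0 M\<^sub>0 P\<^sub>0 \<alpha>) \<noteq> 0"
    by (rule det_nonzero_if_right_inverse)
  show "dPI_Y m E\<^sub>0 M\<^sub>0 P\<^sub>0 \<alpha> = block (- (real m *\<^sub>R S')) (real m *\<^sub>R (S' ** B ** D') + Bp)
      (real m *\<^sub>R (D' ** C ** S'))
      (real (m + 1) *\<^sub>R Z' - real m *\<^sub>R D' - real m *\<^sub>R (D' ** C ** S' ** B ** D') + Dp)"
    unfolding dPI_Y_def matrix_inv_eqI[OF inv] unfolding X0
    by (simp add: E\<^sub>0_def M\<^sub>0_def \<alpha>_def X\<^sub>B_def X\<^sub>C_def X\<^sub>D_def algebra_simps)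
qed

lemma det_dPI_step_twice_expansion:
  fixes M \<beta> :: "complex \<Rightarrow> complex^('r::finite + 's::finite)^('r + 's)"
  assumes M: "matrix_differentiable_at M 0" and \<beta>: "matrix_differentiable_at \<beta> 0"
    and M0: "det (M 0) \<noteq> 0" and X0: "det (dPI_X m (top_scaling 0) (M 0) (\<beta> 0) \<alpha>) \<noteq> 0"
    and factor: "\<forall>\<^sub>F e in at 0. B e = top_scaling e ** M e"
  shows "(\<lambda>e. det (dPI_step (m + 1) (B e) (dPI_step m (\<beta> e) (B e) \<alpha>) \<alpha>)
      - e powi (- int CARD('r)) * det (dPI_Y m (top_scaling 0) (M 0) (\<beta> 0) \<alpha>))
    \<in> O[at 0](\<lambda>e. e powi (1 - int CARD('r)))"
proof (rule bigo_laurent_leading_term[OF _ field_differentiable_det])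
  have X: "matrix_differentiable_at (\<lambda>e. dPI_X m (top_scaling e) (M e) (\<beta> e) \<alpha>) 0"
    by (rule matrix_differentiable_at_dPI_X[OF matrix_differentiable_at_top_scaling M \<beta> M0])
  have "\<forall>\<^sub>F e in at (0::complex). e \<noteq> 0"
    by (simp add: eventually_at_filter)
  with factor det_eventually_nonzero[OF M M0] det_eventually_nonzero[OF X X0]
  show "\<forall>\<^sub>F e in at 0. det (dPI_step (m + 1) (B e) (dPI_step m (\<beta> e) (B e) \<alpha>) \<alpha>) =
      e powi (- int CARD('r)) * det (dPI_Y m (top_scaling e) (M e) (\<beta> e) \<alpha>)"
    by eventually_elim (metis det_dPI_step_twice_top_scaling)
  show "matrix_differentiable_at (\<lambda>e. dPI_Y m (top_scaling e) (M e) (\<beta> e) \<alpha>) 0"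
    by (rule matrix_differentiable_at_dPI_Y[OF matrix_differentiable_at_top_scaling M \<beta> M0 X0])
qed

theorem lemma3:
  fixes P Q :: "nat \<Rightarrow> complex ^ ('r::finite + 's::finite) ^ ('r + 's)"
    and \<alpha> :: "complex ^ ('r + 's) ^ ('r + 's)"
    and m :: nat and R :: real
  assumes m2: "m \<ge> 2"
    and R: "R > 0"
    and conv: "\<And>\<epsilon> i j. cmod \<epsilon> < R \<Longrightarrow>
       summable (\<lambda>k. P k $ i $ j * \<epsilon> ^ k) \<and> summable (\<lambda>k. Q k $ i $ j * \<epsilon> ^ k)"
    and A0: "blkA (Q 0) = 0" and B0: "blkB (Q 0) = 0"
    and exact: "det (block (blkA (Q 1)) (blkB (Q 1)) (blkC (Q 0)) (blkD (Q 0))) \<noteq> 0"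
    and detD: "det (blkD (Q 0)) \<noteq> 0"
    and detZ: "det (real m *\<^sub>R matrix_inv (blkD (Q 0)) - blkD (P 0) - blkD (Q 0) - blkD \<alpha>
                 - matrix_inv (blkD (Q 0)) ** blkC (Q 0) ** (blkB (P 0) + blkB \<alpha>)) \<noteq> 0"
  shows
    "let \<beta>m1 = mser P; \<beta>m = mser Q;
         \<beta>m1' = (\<lambda>\<epsilon>. dPI_step m (\<beta>m1 \<epsilon>) (\<beta>m \<epsilon>) \<alpha>);
         \<beta>m2 = (\<lambda>\<epsilon>. dPI_step (m + 1) (\<beta>m \<epsilon>) (\<beta>m1' \<epsilon>) \<alpha>);
         D0 = blkD (Q 0); C0 = blkC (Q 0); B1 = blkB (Q 1); A1 = blkA (Q 1);
         Dinv = matrix_inv D0;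
         S1 = A1 - B1 ** Dinv ** C0;
         Sinv = matrix_inv S1;
         Z1 = real m *\<^sub>R Dinv - blkD (P 0) - D0 - blkD \<alpha> - Dinv ** C0 ** (blkB (P 0) + blkB \<alpha>);
         K = det (block
               (- (real m *\<^sub>R Sinv))
               (real m *\<^sub>R (Sinv ** B1 ** Dinv) + blkB (P 0))
               (real m *\<^sub>R (Dinv ** C0 ** Sinv))
               (real (m + 1) *\<^sub>R matrix_inv Z1 - real m *\<^sub>R Dinv
                  - real m *\<^sub>R (Dinv ** C0 ** Sinv ** B1 ** Dinv) + blkD (P 0)))
     in (\<lambda>\<epsilon>. det (\<beta>m2 \<epsilon>) - \<epsilon> powi (- int CARD('r)) * K)
          \<in> O[at 0](\<lambda>\<epsilon>. \<epsilon> powi (1 - int CARD('r)))"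
proof -
  define M where "M = mser (shift_top_rows Q)"
  define S where "S = blkA (Q 1) - blkB (Q 1) ** matrix_inv (blkD (Q 0)) ** blkC (Q 0)"
  have M_diff: "matrix_differentiable_at M 0"
    unfolding M_def using conv R
    by (intro matrix_differentiable_at_mser summable_shift_top_rows) auto
  have P_diff: "matrix_differentiable_at (mser P) 0"
    using conv R by (intro matrix_differentiable_at_mser) auto
  have M0: "M 0 = block (blkA (Q 1)) (blkB (Q 1)) (blkC (Q 0)) (blkD (Q 0))"
    by (simp add: M_def mser_0 shift_top_rows_0)
  have detM0: "det (M 0) \<noteq> 0"
    using exact M0 by simp
  have detS: "det S \<noteq> 0"
    unfolding S_def by (rule schur_complement_D_invertible[OF exact matrix_inv_inverse(2)[OF detD]])
  have "m \<noteq> 0"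
    using m2 by simp
  note degenerate = dPI_Y_degenerate[OF matrix_inv_inverse(1)[OF detD]
      matrix_inv_inverse(1)[OF detS] S_def matrix_inv_inverse(1)[OF detZ] refl \<open>m \<noteq> 0\<close>,
      of "blkA (P 0)" "blkC (P 0)" "blkA \<alpha>" "blkC \<alpha>", unfolded block_blk]
  have X0: "det (dPI_X m (top_scaling 0) (M 0) (mser P 0) \<alpha>) \<noteq> 0"
    using degenerate(1) by (simp add: top_scaling_0 M0 mser_0)
  have "\<forall>\<^sub>F e in at (0::complex). cmod e < R"
    using R by (auto simp: eventually_at dist_norm intro!: exI[of _ R])
  then have "\<forall>\<^sub>F e in at 0. mser Q e = top_scaling e ** M e"
    by eventually_elim (use conv A0 B0 in \<open>auto simp: M_def intro!: mser_eq_top_scaling_mult\<close>)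
  from det_dPI_step_twice_expansion[OF M_diff P_diff detM0 X0 this]
  show ?thesis
    unfolding Let_def top_scaling_0 M0 mser_0 degenerate(2) S_def .
qed

end
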